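(* Each of the following two verification condition providers yields lower bounds for $\mathrm{awp}$ and is preserved by $\mathrm{trans}^{\succeq}_{\mathrm{awp}}$: (1) $\mathsf{dASTSUBINV}$, where for $C=\mathtt{while}(\varphi)\{C_{\mathrm{body}}\}[I]$ and $f\in\mathbb{E}$, $\mathsf{dASTSUBINV}(C,f)=\mathsf{true}$ iff $[\varphi]\cdot\mathrm{awp}^*[\![C_{\mathrm{body}}]\!](I)+[\neg\varphi]\cdot f\ge I$, $C$ is dAST, and $I$ and $f$ are bounded by some constant $b\in\mathbb{R}_{\ge0}$; (2) $\mathsf{dPASTSUBINV}$, where for $C=\mathtt{while}(\varphi)\{C_{\mathrm{body}}\}[I]$ and $f\in\mathbb{E}$, $\mathsf{dPASTSUBINV}(C,f)=\mathsf{true}$ iff $[\varphi]\cdot\mathrm{awp}^*[\![C_{\mathrm{body}}]\!](I)+[\neg\varphi]\cdot f\ge I$, $C$ is dPAST, and $C$ is suitable for optional stopping w.r.t. $f$.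
   Context: States: fix a countably infinite set of program variables with values in $\mathbb{Q}_{\ge 0}$; a state is a map $\sigma$ from variables to $\mathbb{Q}_{\ge0}$ which is $0$ for all but finitely many variables; $\mathsf{States}$ is the set of states. A predicate is a map $\varphi:\mathsf{States}\to\{\mathsf{true},\mathsf{false}\}$; $\varphi\models\psi$ means every state satisfying $\varphi$ satisfies $\psi$; $\models\varphi$ means $\varphi$ holds in every state; $\varphi\Rightarrow\psi$ is the usual implication. Expectations: $\mathbb{E}$ is the set of maps $\mathsf{States}\to[0,\infty]$, ordered pointwise; $+,\cdot$ pointwise with $0\cdot\infty=0$; $\sqcap,\sqcup$ pointwise min/max; $[\varphi]$ Iverson bracket; $(\varphi\to g)(\sigma)=g(\sigma)$ if $\sigma\models\varphi$, else $\infty$; $f[x/E](\sigma)=f(\sigma[x\mapsto E(\sigma)])$; $f$ is bounded by $b$ if $f(\sigma)\le b$ for all $\sigma$. Programs of $\mathsf{pGCL}$: $C ::= \mathtt{skip} \mid x:=E \mid C;C \mid \mathtt{if}\ \varphi_1\to C\ \square\ \varphi_2\to C \mid \{C\}[p]\{C\} \mid \mathtt{while}(\varphi)\{C\}[I]$, where $E:\mathsf{States}\to\mathbb{Q}_{\ge0}$, $p:\mathsf{States}\to[0,1]$, in every guarded choice $\varphi_1\vee\varphi_2$ is valid (when both hold the choice is nondeterministic), and every loop carries an invariant annotation $I\in\mathbb{E}$. Weakest preexpectations for $\mathcal{T}\in\{\mathrm{dwp},\mathrm{awp}\}$: $\mathcal{T}[\![\mathtt{skip}]\!](f)=f$; $\mathcal{T}[\![x:=E]\!](f)=f[x/E]$;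 $\mathcal{T}[\![C_1;C_2]\!](f)=\mathcal{T}[\![C_1]\!](\mathcal{T}[\![C_2]\!](f))$; $\mathrm{dwp}$ of a guarded choice: $(\varphi_1\to\mathrm{dwp}[\![C_1]\!](f))\sqcap(\varphi_2\to\mathrm{dwp}[\![C_2]\!](f))$; $\mathrm{awp}$ of a guarded choice: $[\varphi_1]\cdot\mathrm{awp}[\![C_1]\!](f)\sqcup[\varphi_2]\cdot\mathrm{awp}[\![C_2]\!](f)$; $\mathcal{T}[\![\{C_1\}[p]\{C_2\}]\!](f)=p\cdot\mathcal{T}[\![C_1]\!](f)+(1-p)\cdot\mathcal{T}[\![C_2]\!](f)$; loops: least fixpoint of $g\mapsto[\neg\varphi]\cdot f+[\varphi]\cdot\mathcal{T}[\![C']\!](g)$. $\mathrm{awp}^*$ follows the $\mathrm{awp}$ rules except $\mathrm{awp}^*[\![\mathtt{while}(\varphi)\{C'\}[I]]\!](f)=I$. Termination notions: $C$ is dAST (demonically almost-surely terminating) if $\mathrm{dwp}[\![C]\!](1)=1$. $C$ is dPAST (positively demonically almost-surely terminating) if its expected runtime (in the sense of the expected-runtime calculus of Kaminski et al., where nondeterminism is resolved in the worst case, i.e. maximizing runtime) is finite for all initial states. A loop $\mathtt{while}(\varphi)\{C_{\mathrm{body}}\}[I]$ is suitable for optional stopping w.r.t. $f$ if (i) $I=[\varphi]\cdot I'+[\neg\varphi]\cdot f$ for some $I'\in\mathbb{E}$, (ii) $f$, $I$ and $[\varphi]\cdot\mathrm{awp}[\![C_{\mathrm{body}}]\!](I)+[\neg\varphi]\cdot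 f$ are all pointwise $<\infty$, and (iii) there is $b\in\mathbb{R}_{\ge0}$ such that for all states $\sigma$, $([\varphi]\cdot\mathrm{awp}[\![C_{\mathrm{body}}]\!](\lambda\tau.|I(\tau)-I(\sigma)|))(\sigma)\le b$. Implementation relation $\multimap$: smallest partial order on $\mathsf{pGCL}$ closed under: if $C_1'\multimap C_1$, $C_2'\multimap C_2$ then $C_1';C_2'\multimap C_1;C_2$ and $\{C_1'\}[p]\{C_2'\}\multimap\{C_1\}[p]\{C_2\}$; if moreover $\varphi_1'\models\varphi_1$, $\varphi_2'\models\varphi_2$, $\models\varphi_1'\vee\varphi_2'$ then $\mathtt{if}\ \varphi_1'\to C_1'\ \square\ \varphi_2'\to C_2'\multimap\mathtt{if}\ \varphi_1\to C_1\ \square\ \varphi_2\to C_2$; if $C'\multimap C$ then $\mathtt{while}(\varphi)\{C'\}\multimap\mathtt{while}(\varphi)\{C\}$. Verification conditions: a provider $\mathfrak{C}$ maps annotated loops and $f\in\mathbb{E}$ to truth values; $\mathrm{vc}^{\mathfrak{C},\mathrm{awp}}[\![C]\!](f)$: $\mathsf{true}$ for $\mathtt{skip}$ and assignments; $\mathrm{vc}[\![C_1]\!](\mathrm{awp}^*[\![C_2]\!](f))\wedge\mathrm{vc}[\![C_2]\!](f)$ for $C_1;C_2$; $\mathrm{vc}[\![C_1]\!](f)\wedge\mathrm{vc}[\![C_2]\!](f)$ for guarded and probabilistic choices; $\mathfrak{C}(\mathtt{while}(\varphi)\{C'\}[I],f)\wedge\mathrm{vc}[\![C']\!](I)$ for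 loops. $\mathfrak{C}$ yields lower bounds for $\mathrm{awp}$ if for all $C\in\mathsf{pGCL}$, $f\in\mathbb{E}$, $\mathrm{vc}^{\mathfrak{C},\mathrm{awp}}[\![C]\!](f)$ implies $\mathrm{awp}[\![C]\!](f)\ge\mathrm{awp}^*[\![C]\!](f)$. Transformer $\mathrm{trans}^{\succeq}_{\mathrm{awp}}$ (with $f\succeq g$ the predicate true at $\sigma$ iff $f(\sigma)\ge g(\sigma)$): $\mathtt{skip}$, assignments unchanged; $C_1;C_2\mapsto \mathrm{trans}[\![C_1]\!](\mathrm{awp}^*[\![C_2]\!](f));\mathrm{trans}[\![C_2]\!](f)$; $\mathtt{if}\ \varphi_1\to C_1\ \square\ \varphi_2\to C_2\mapsto\mathtt{if}\ \psi_1\to\mathrm{trans}[\![C_1]\!](f)\ \square\ \psi_2\to\mathrm{trans}[\![C_2]\!](f)$ with $\psi_1=\varphi_1\wedge(\varphi_2\Rightarrow\mathrm{awp}^*[\![C_1]\!](f)\succeq\mathrm{awp}^*[\![C_2]\!](f))$, $\psi_2=\varphi_2\wedge(\varphi_1\Rightarrow\mathrm{awp}^*[\![C_2]\!](f)\succeq\mathrm{awp}^*[\![C_1]\!](f))$; probabilistic choice transformed branchwise; $\mathtt{while}(\varphi)\{C'\}[I]\mapsto\mathtt{while}(\varphi)\{\mathrm{trans}[\![C']\!](I)\}[I]$. $\mathrm{trans}^{\succeq}_{\mathrm{awp}}$ preserves $\mathfrak{C}$ if for all $C,C'$, $f$: $\mathrm{vc}^{\mathfrak{C},\mathrm{awp}}[\![C]\!](f)$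 and $C'\multimap\mathrm{trans}^{\succeq}_{\mathrm{awp}}[\![C]\!](f)$ imply $\mathrm{vc}^{\mathfrak{C},\mathrm{awp}}[\![C']\!](f)$. *)

theory Defs
  imports Complex_Main "HOL-Library.Extended_Nonnegative_Real"
begin

typedef nnrat = "{q :: rat. 0 \<le> q}" by auto

typedef state = "{\<sigma> :: nat \<Rightarrow> rat. (\<forall>x. 0 \<le> \<sigma> x) \<and> finite {x. \<sigma> x \<noteq> 0}}"
  by (rule exI[of _ "\<lambda>_. 0"]) auto

typedef prob = "{p :: real. 0 \<le> p \<and> p \<le> 1}" by auto

type_synonym pred = "state \<Rightarrow> bool"
type_synonym expect = "state \<Rightarrow> ennreal"

definition upd :: "state \<Rightarrow> nat \<Rightarrow> nnrat \<Rightarrow> state" where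
  "upd \<sigma> x q = Abs_state ((Rep_state \<sigma>)(x := Rep_nnrat q))"

definition iver :: "pred \<Rightarrow> expect" where
  "iver \<phi> \<sigma> = (if \<phi> \<sigma> then 1 else 0)"

definition guardto :: "pred \<Rightarrow> expect \<Rightarrow> expect" where
  "guardto \<phi> g \<sigma> = (if \<phi> \<sigma> then g \<sigma> else \<infinity>)"

definition subst :: "expect \<Rightarrow> nat \<Rightarrow> (state \<Rightarrow> nnrat) \<Rightarrow> expect" where
  "subst f x E \<sigma> = f (upd \<sigma> x (E \<sigma>))"

definition succeq :: "expect \<Rightarrow> expect \<Rightarrow> pred" where
  "succeq f g \<sigma> = (f \<sigma> \<ge> g \<sigma>)"

definition pr :: "(state \<Rightarrow> prob) \<Rightarrow> state \<Rightarrow> ennreal" where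
  "pr p \<sigma> = ennreal (Rep_prob (p \<sigma>))"

definition npr :: "(state \<Rightarrow> prob) \<Rightarrow> state \<Rightarrow> ennreal" where
  "npr p \<sigma> = ennreal (1 - Rep_prob (p \<sigma>))"

datatype prog =
    Skip
  | Assign nat "state \<Rightarrow> nnrat"
  | Seq prog prog
  | GChoice pred prog pred prog
  | PChoice prog "state \<Rightarrow> prob" prog
  | While pred prog expect  \<comment> \<open>while(phi){C}[I]\<close>

text \<open>Membership in pGCL: in every guarded choice phi1 \/ phi2 is valid.\<close>
primrec wf_prog :: "prog \<Rightarrow> bool" where
  "wf_prog Skip = True"
| "wf_prog (Assign x E) = True"
| "wf_prog (Seq C1 C2) = (wf_prog C1 \<and> wf_prog C2)"
| "wf_prog (GChoice \<phi>1 C1 \<phi>2 C2) = ((\<forall>\<sigma>. \<phi>1 \<sigma> \<or> \<phi>2 \<sigma>) \<and> wf_prog C1 \<and> wf_prog C2)"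
| "wf_prog (PChoice C1 p C2) = (wf_prog C1 \<and> wf_prog C2)"
| "wf_prog (While \<phi> C I) = wf_prog C"

primrec dwp :: "prog \<Rightarrow> expect \<Rightarrow> expect" where
  "dwp Skip f = f"
| "dwp (Assign x E) f = subst f x E"
| "dwp (Seq C1 C2) f = dwp C1 (dwp C2 f)"
| "dwp (GChoice \<phi>1 C1 \<phi>2 C2) f =
     (\<lambda>\<sigma>. min (guardto \<phi>1 (dwp C1 f) \<sigma>) (guardto \<phi>2 (dwp C2 f) \<sigma>))"
| "dwp (PChoice C1 p C2) f = (\<lambda>\<sigma>. pr p \<sigma> * dwp C1 f \<sigma> + npr p \<sigma> * dwp C2 f \<sigma>)"
| "dwp (While \<phi> C I) f =
     lfp (\<lambda>g \<sigma>. iver (\<lambda>\<tau>. \<not> \<phi> \<tau>) \<sigma> * f \<sigma> + iver \<phi> \<sigma> * dwp C g \<sigma>)"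

primrec awp :: "prog \<Rightarrow> expect \<Rightarrow> expect" where
  "awp Skip f = f"
| "awp (Assign x E) f = subst f x E"
| "awp (Seq C1 C2) f = awp C1 (awp C2 f)"
| "awp (GChoice \<phi>1 C1 \<phi>2 C2) f =
     (\<lambda>\<sigma>. max (iver \<phi>1 \<sigma> * awp C1 f \<sigma>) (iver \<phi>2 \<sigma> * awp C2 f \<sigma>))"
| "awp (PChoice C1 p C2) f = (\<lambda>\<sigma>. pr p \<sigma> * awp C1 f \<sigma> + npr p \<sigma> * awp C2 f \<sigma>)"
| "awp (While \<phi> C I) f =
     lfp (\<lambda>g \<sigma>. iver (\<lambda>\<tau>. \<not> \<phi> \<tau>) \<sigma> * f \<sigma> + iver \<phi> \<sigma> * awp C g \<sigma>)"

primrec awp_star :: "prog \<Rightarrow> expect \<Rightarrow> expect" where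
  "awp_star Skip f = f"
| "awp_star (Assign x E) f = subst f x E"
| "awp_star (Seq C1 C2) f = awp_star C1 (awp_star C2 f)"
| "awp_star (GChoice \<phi>1 C1 \<phi>2 C2) f =
     (\<lambda>\<sigma>. max (iver \<phi>1 \<sigma> * awp_star C1 f \<sigma>) (iver \<phi>2 \<sigma> * awp_star C2 f \<sigma>))"
| "awp_star (PChoice C1 p C2) f =
     (\<lambda>\<sigma>. pr p \<sigma> * awp_star C1 f \<sigma> + npr p \<sigma> * awp_star C2 f \<sigma>)"
| "awp_star (While \<phi> C I) f = I"

section \<open>Expected runtimes (Kaminski et al.), demonic = maximizing nondeterminism\<close>

primrec ert :: "prog \<Rightarrow> expect \<Rightarrow> expect" where
  "ert Skip t = (\<lambda>\<sigma>. 1 + t \<sigma>)"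
| "ert (Assign x E) t = (\<lambda>\<sigma>. 1 + subst t x E \<sigma>)"
| "ert (Seq C1 C2) t = ert C1 (ert C2 t)"
| "ert (GChoice \<phi>1 C1 \<phi>2 C2) t =
     (\<lambda>\<sigma>. 1 + max (iver \<phi>1 \<sigma> * ert C1 t \<sigma>) (iver \<phi>2 \<sigma> * ert C2 t \<sigma>))"
| "ert (PChoice C1 p C2) t = (\<lambda>\<sigma>. 1 + (pr p \<sigma> * ert C1 t \<sigma> + npr p \<sigma> * ert C2 t \<sigma>))"
| "ert (While \<phi> C I) t =
     lfp (\<lambda>X \<sigma>. 1 + (iver (\<lambda>\<tau>. \<not> \<phi> \<tau>) \<sigma> * t \<sigma> + iver \<phi> \<sigma> * ert C X \<sigma>))"

definition dAST :: "prog \<Rightarrow> bool" where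
  "dAST C \<longleftrightarrow> dwp C (\<lambda>_. 1) = (\<lambda>_. 1)"

definition dPAST :: "prog \<Rightarrow> bool" where
  "dPAST C \<longleftrightarrow> (\<forall>\<sigma>. ert C (\<lambda>_. 0) \<sigma> < \<infinity>)"

text \<open>|a - b| on [0,\<infinity>]; coincides with the usual absolute difference on finite values.\<close>
definition absdiff :: "ennreal \<Rightarrow> ennreal \<Rightarrow> ennreal" where
  "absdiff a b = (a - b) + (b - a)"

fun suitable_OST :: "prog \<Rightarrow> expect \<Rightarrow> bool" where
  "suitable_OST (While \<phi> Cb I) f \<longleftrightarrow>
     (\<exists>I'. I = (\<lambda>\<sigma>. iver \<phi> \<sigma> * I' \<sigma> + iver (\<lambda>\<tau>. \<not> \<phi> \<tau>) \<sigma> * f \<sigma>)) \<and>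
     (\<forall>\<sigma>. f \<sigma> < \<infinity> \<and> I \<sigma> < \<infinity> \<and>
          iver \<phi> \<sigma> * awp Cb I \<sigma> + iver (\<lambda>\<tau>. \<not> \<phi> \<tau>) \<sigma> * f \<sigma> < \<infinity>) \<and>
     (\<exists>b::real. 0 \<le> b \<and>
        (\<forall>\<sigma>. iver \<phi> \<sigma> * awp Cb (\<lambda>\<tau>. absdiff (I \<tau>) (I \<sigma>)) \<sigma> \<le> ennreal b))"
| "suitable_OST _ f \<longleftrightarrow> False"

inductive impl :: "prog \<Rightarrow> prog \<Rightarrow> bool" where
  impl_refl: "wf_prog C \<Longrightarrow> impl C C"
| impl_trans: "impl C1 C2 \<Longrightarrow> impl C2 C3 \<Longrightarrow> impl C1 C3"
| impl_seq: "impl C1' C1 \<Longrightarrow> impl C2' C2 \<Longrightarrow> impl (Seq C1' C2') (Seq C1 C2)"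
| impl_pchoice: "impl C1' C1 \<Longrightarrow> impl C2' C2 \<Longrightarrow> impl (PChoice C1' p C2') (PChoice C1 p C2)"
| impl_gchoice: "impl C1' C1 \<Longrightarrow> impl C2' C2 \<Longrightarrow>
    (\<forall>\<sigma>. \<phi>1' \<sigma> \<longrightarrow> \<phi>1 \<sigma>) \<Longrightarrow> (\<forall>\<sigma>. \<phi>2' \<sigma> \<longrightarrow> \<phi>2 \<sigma>) \<Longrightarrow> (\<forall>\<sigma>. \<phi>1' \<sigma> \<or> \<phi>2' \<sigma>) \<Longrightarrow>
    impl (GChoice \<phi>1' C1' \<phi>2' C2') (GChoice \<phi>1 C1 \<phi>2 C2)"
| impl_while: "impl C' C \<Longrightarrow> impl (While \<phi> C' I) (While \<phi> C I)"

type_synonym provider = "prog \<Rightarrow> expect \<Rightarrow> bool"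

primrec vc :: "provider \<Rightarrow> prog \<Rightarrow> expect \<Rightarrow> bool" where
  "vc P Skip f = True"
| "vc P (Assign x E) f = True"
| "vc P (Seq C1 C2) f = (vc P C1 (awp_star C2 f) \<and> vc P C2 f)"
| "vc P (GChoice \<phi>1 C1 \<phi>2 C2) f = (vc P C1 f \<and> vc P C2 f)"
| "vc P (PChoice C1 p C2) f = (vc P C1 f \<and> vc P C2 f)"
| "vc P (While \<phi> C I) f = (P (While \<phi> C I) f \<and> vc P C I)"

definition yields_lower_bounds_awp :: "provider \<Rightarrow> bool" where
  "yields_lower_bounds_awp P \<longleftrightarrow>
     (\<forall>C f. wf_prog C \<longrightarrow> vc P C f \<longrightarrow> awp C f \<ge> awp_star C f)"

primrec trans_awp :: "prog \<Rightarrow> expect \<Rightarrow> prog" where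
  "trans_awp Skip f = Skip"
| "trans_awp (Assign x E) f = Assign x E"
| "trans_awp (Seq C1 C2) f = Seq (trans_awp C1 (awp_star C2 f)) (trans_awp C2 f)"
| "trans_awp (GChoice \<phi>1 C1 \<phi>2 C2) f =
     GChoice (\<lambda>\<sigma>. \<phi>1 \<sigma> \<and> (\<phi>2 \<sigma> \<longrightarrow> succeq (awp_star C1 f) (awp_star C2 f) \<sigma>)) (trans_awp C1 f)
             (\<lambda>\<sigma>. \<phi>2 \<sigma> \<and> (\<phi>1 \<sigma> \<longrightarrow> succeq (awp_star C2 f) (awp_star C1 f) \<sigma>)) (trans_awp C2 f)"
| "trans_awp (PChoice C1 p C2) f = PChoice (trans_awp C1 f) p (trans_awp C2 f)"
| "trans_awp (While \<phi> C I) f = While \<phi> (trans_awp C I) I"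

definition trans_preserves :: "provider \<Rightarrow> bool" where
  "trans_preserves P \<longleftrightarrow>
     (\<forall>C C' f. wf_prog C \<longrightarrow> vc P C f \<longrightarrow> impl C' (trans_awp C f) \<longrightarrow> vc P C' f)"

fun dASTSUBINV :: provider where
  "dASTSUBINV (While \<phi> Cb I) f \<longleftrightarrow>
     (\<forall>\<sigma>. iver \<phi> \<sigma> * awp_star Cb I \<sigma> + iver (\<lambda>\<tau>. \<not> \<phi> \<tau>) \<sigma> * f \<sigma> \<ge> I \<sigma>) \<and>
     dAST (While \<phi> Cb I) \<and>
     (\<exists>b::real. 0 \<le> b \<and> (\<forall>\<sigma>. I \<sigma> \<le> ennreal b \<and> f \<sigma> \<le> ennreal b))"
| "dASTSUBINV _ f \<longleftrightarrow> False"

fun dPASTSUBINV :: provider where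
  "dPASTSUBINV (While \<phi> Cb I) f \<longleftrightarrow>
     (\<forall>\<sigma>. iver \<phi> \<sigma> * awp_star Cb I \<sigma> + iver (\<lambda>\<tau>. \<not> \<phi> \<tau>) \<sigma> * f \<sigma> \<ge> I \<sigma>) \<and>
     dPAST (While \<phi> Cb I) \<and>
     suitable_OST (While \<phi> Cb I) f"
| "dPASTSUBINV _ f \<longleftrightarrow> False"

end

theory Submission
  imports Defs
begin

(*
  Both providers are instances of one argument. Call a provider stable if it survives
  replacing a loop body by a refinement with the same awp*, and sound for deterministic
  loops if it yields I <= awp(loop)(f) whenever the body is deterministic and satisfies
  awp* <= awp. Every refinement of trans C f has the same awp* as C, which gives
  preservation. For the lower bound, resolve the nondeterminism left in trans C f in favour
  of the first branch: the resulting deterministic program D still satisfies the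
  verification conditions, awp* D f = awp* C f and awp D f <= awp C f, while
  awp* D f <= awp D f follows by induction on D.

  Determinism is what the loop rules need: awp of a deterministic program is additive, so
  a sub-invariant I behaves like a submartingale. If I <= b and the loop terminates almost
  surely, then I + b <= I + b * awp(loop)(1) <= awp(loop)(f) + b. In the positive case we
  use optional stopping instead: with Z the expected accumulated variation of I along a
  run, I + Z <= awp(loop)(f) + Z, and Z is finite because it is bounded by b times the
  expected runtime. Almost-sure termination itself follows from finite expected runtime
  by the counting inequality n <= ert C 0 + n * awp C 1.
*)

section \<open>Healthiness of the transformers\<close>

lemma iver_simps [simp]: "\<phi> \<sigma> \<Longrightarrow> iver \<phi> \<sigma> = 1" "\<not> \<phi> \<sigma> \<Longrightarrow> iver \<phi> \<sigma> = 0"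
  by (auto simp: iver_def)

lemma pr_plus_npr: "pr p \<sigma> + npr p \<sigma> = 1"
  using Rep_prob[of "p \<sigma>"] by (simp add: pr_def npr_def ennreal_plus[symmetric])

lemma ennreal_add_SUP_le:
  fixes a c :: ennreal
  assumes "a \<le> c" and "\<And>x. x \<in> M \<Longrightarrow> a + f x \<le> c"
  shows "a + (SUP x\<in>M. f x) \<le> c"
proof (cases "M = {}")
  case True
  then show ?thesis using assms(1) by (simp add: bot_ennreal)
next
  case False
  then show ?thesis using assms(2) by (simp add: ennreal_SUP_add_right SUP_least)
qed

definition awp_char :: "pred \<Rightarrow> prog \<Rightarrow> expect \<Rightarrow> expect \<Rightarrow> expect" where
  "awp_char \<phi> C f = (\<lambda>g \<sigma>. iver (\<lambda>\<tau>. \<not> \<phi> \<tau>) \<sigma> * f \<sigma> + iver \<phi> \<sigma> * awp C g \<sigma>)"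

definition dwp_char :: "pred \<Rightarrow> prog \<Rightarrow> expect \<Rightarrow> expect \<Rightarrow> expect" where
  "dwp_char \<phi> C f = (\<lambda>g \<sigma>. iver (\<lambda>\<tau>. \<not> \<phi> \<tau>) \<sigma> * f \<sigma> + iver \<phi> \<sigma> * dwp C g \<sigma>)"

definition ert_char :: "pred \<Rightarrow> prog \<Rightarrow> expect \<Rightarrow> expect \<Rightarrow> expect" where
  "ert_char \<phi> C t = (\<lambda>X \<sigma>. 1 + (iver (\<lambda>\<tau>. \<not> \<phi> \<tau>) \<sigma> * t \<sigma> + iver \<phi> \<sigma> * ert C X \<sigma>))"

lemma awp_While: "awp (While \<phi> C I) f = lfp (awp_char \<phi> C f)"
  by (simp add: awp_char_def)

lemma dwp_While: "dwp (While \<phi> C I) f = lfp (dwp_char \<phi> C f)"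
  by (simp add: dwp_char_def)

lemma ert_While: "ert (While \<phi> C I) t = lfp (ert_char \<phi> C t)"
  by (simp add: ert_char_def)

lemma awp_char_apply: "awp_char \<phi> C f g \<sigma> = (if \<phi> \<sigma> then awp C g \<sigma> else f \<sigma>)"
  by (simp add: awp_char_def)

lemma dwp_char_apply: "dwp_char \<phi> C f g \<sigma> = (if \<phi> \<sigma> then dwp C g \<sigma> else f \<sigma>)"
  by (simp add: dwp_char_def)

lemma ert_char_apply: "ert_char \<phi> C t X \<sigma> = 1 + (if \<phi> \<sigma> then ert C X \<sigma> else t \<sigma>)"
  by (simp add: ert_char_def)

declare awp.simps(6) [simp del] dwp.simps(6) [simp del] ert.simps(6) [simp del]

lemma awp_mono: "(\<And>\<tau>. g \<tau> \<le> h \<tau>) \<Longrightarrow> awp C g \<sigma> \<le> awp C h \<sigma>"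
proof (induction C arbitrary: g h \<sigma>)
  case (GChoice \<phi>1 C1 \<phi>2 C2)
  have "awp C1 g \<sigma> \<le> awp C1 h \<sigma>" "awp C2 g \<sigma> \<le> awp C2 h \<sigma>"
    using GChoice by blast+
  then show ?case by (simp only: awp.simps) (metis max.mono mult_left_mono zero_le)
next
  case (PChoice C1 p C2)
  then show ?case by (simp add: add_mono mult_left_mono)
next
  case (While \<phi> C I)
  have "lfp (awp_char \<phi> C g) \<le> lfp (awp_char \<phi> C h)"
    using While by (intro lfp_mono) (simp add: awp_char_apply le_fun_def)
  then show ?case by (simp add: awp_While le_fun_def)
qed (auto simp: subst_def)

lemma dwp_mono: "(\<And>\<tau>. g \<tau> \<le> h \<tau>) \<Longrightarrow> dwp C g \<sigma> \<le> dwp C h \<sigma>"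
proof (induction C arbitrary: g h \<sigma>)
  case (GChoice \<phi>1 C1 \<phi>2 C2)
  have "dwp C1 g \<sigma> \<le> dwp C1 h \<sigma>" "dwp C2 g \<sigma> \<le> dwp C2 h \<sigma>"
    using GChoice by blast+
  then show ?case unfolding dwp.simps by (intro min.mono) (simp_all add: guardto_def)
next
  case (PChoice C1 p C2)
  then show ?case by (simp add: add_mono mult_left_mono)
next
  case (While \<phi> C I)
  have "lfp (dwp_char \<phi> C g) \<le> lfp (dwp_char \<phi> C h)"
    using While by (intro lfp_mono) (simp add: dwp_char_apply le_fun_def)
  then show ?case by (simp add: dwp_While le_fun_def)
qed (auto simp: subst_def)

lemma ert_mono: "(\<And>\<tau>. t \<tau> \<le> u \<tau>) \<Longrightarrow> ert C t \<sigma> \<le> ert C u \<sigma>"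
proof (induction C arbitrary: t u \<sigma>)
  case (GChoice \<phi>1 C1 \<phi>2 C2)
  have "ert C1 t \<sigma> \<le> ert C1 u \<sigma>" "ert C2 t \<sigma> \<le> ert C2 u \<sigma>"
    using GChoice by blast+
  then show ?case by (simp only: ert.simps) (metis max.mono mult_left_mono add_left_mono zero_le)
next
  case (PChoice C1 p C2)
  then show ?case by (simp add: add_mono mult_left_mono)
next
  case (While \<phi> C I)
  have "lfp (ert_char \<phi> C t) \<le> lfp (ert_char \<phi> C u)"
    using While by (intro lfp_mono) (simp add: ert_char_apply le_fun_def add_left_mono)
  then show ?case by (simp add: ert_While le_fun_def)
qed (auto simp: subst_def intro: add_left_mono)

lemma mono_awp_char: "mono (awp_char \<phi> C f)"
  by (rule monoI) (simp add: awp_char_apply le_fun_def awp_mono)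

lemma mono_ert_char: "mono (ert_char \<phi> C t)"
  by (rule monoI) (simp add: ert_char_apply le_fun_def add_left_mono ert_mono)

lemma lfp_awp_char_unfold:
  "lfp (awp_char \<phi> C f) \<sigma> = (if \<phi> \<sigma> then awp C (lfp (awp_char \<phi> C f)) \<sigma> else f \<sigma>)"
  by (subst lfp_unfold[OF mono_awp_char]) (simp add: awp_char_apply)

lemma lfp_ert_char_unfold:
  "lfp (ert_char \<phi> C t) \<sigma> = 1 + (if \<phi> \<sigma> then ert C (lfp (ert_char \<phi> C t)) \<sigma> else t \<sigma>)"
  by (subst lfp_unfold[OF mono_ert_char]) (simp add: ert_char_apply)

lemma awp_const_le: "(\<And>\<tau>. g \<tau> \<le> c) \<Longrightarrow> awp C g \<sigma> \<le> c"
proof (induction C arbitrary: g \<sigma>)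
  case (PChoice C1 p C2)
  then have "awp (PChoice C1 p C2) g \<sigma> \<le> pr p \<sigma> * c + npr p \<sigma> * c"
    by (simp add: add_mono mult_left_mono)
  also have "\<dots> = c"
    by (simp add: pr_plus_npr flip: distrib_right)
  finally show ?case .
next
  case (While \<phi> C I)
  have "lfp (awp_char \<phi> C g) \<le> (\<lambda>_. c)"
    using While by (intro lfp_lowerbound) (simp add: awp_char_apply le_fun_def)
  then show ?case by (simp add: awp_While le_fun_def)
qed (auto simp: subst_def iver_def)

lemma awp_scale_le: "awp C (\<lambda>\<tau>. c * g \<tau>) \<sigma> \<le> c * awp C g \<sigma>"
proof (induction C arbitrary: g \<sigma>)
  case (Seq C1 C2)
  have "awp C1 (awp C2 (\<lambda>\<tau>. c * g \<tau>)) \<sigma> \<le> awp C1 (\<lambda>\<tau>. c * awp C2 g \<tau>) \<sigma>"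
    using Seq.IH(2) by (rule awp_mono)
  also have "\<dots> \<le> c * awp C1 (awp C2 g) \<sigma>"
    by (rule Seq.IH(1))
  finally show ?case by simp
next
  case (GChoice \<phi>1 C1 \<phi>2 C2)
  have "iver \<phi>1 \<sigma> * awp C1 (\<lambda>\<tau>. c * g \<tau>) \<sigma> \<le> c * (iver \<phi>1 \<sigma> * awp C1 g \<sigma>)"
    and "iver \<phi>2 \<sigma> * awp C2 (\<lambda>\<tau>. c * g \<tau>) \<sigma> \<le> c * (iver \<phi>2 \<sigma> * awp C2 g \<sigma>)"
    using GChoice.IH[of g \<sigma>] by (simp_all add: iver_def)
  then show ?case
    by simp (meson order_trans mult_left_mono max.cobounded1 max.cobounded2 zero_le)
next
  case (PChoice C1 p C2)
  then have "awp (PChoice C1 p C2) (\<lambda>\<tau>. c * g \<tau>) \<sigma>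
      \<le> pr p \<sigma> * (c * awp C1 g \<sigma>) + npr p \<sigma> * (c * awp C2 g \<sigma>)"
    by (simp add: add_mono mult_left_mono)
  then show ?case by (simp add: distrib_left mult.left_commute)
next
  case (While \<phi> C I)
  let ?L = "lfp (awp_char \<phi> C g)"
  have "lfp (awp_char \<phi> C (\<lambda>\<tau>. c * g \<tau>)) \<le> (\<lambda>\<sigma>. c * ?L \<sigma>)"
  proof (rule lfp_lowerbound, rule le_funI)
    fix \<sigma>
    show "awp_char \<phi> C (\<lambda>\<tau>. c * g \<tau>) (\<lambda>\<sigma>. c * ?L \<sigma>) \<sigma> \<le> c * ?L \<sigma>"
      using While.IH[of ?L \<sigma>] lfp_awp_char_unfold[of \<phi> C g \<sigma>] by (simp add: awp_char_apply)
  qed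
  then show ?case by (simp add: awp_While le_fun_def)
qed (auto simp: subst_def)

lemma awp_scale:
  assumes "c < \<infinity>"
  shows "awp C (\<lambda>\<tau>. c * g \<tau>) \<sigma> = c * awp C g \<sigma>"
proof (cases "c = 0")
  case True
  then show ?thesis using awp_const_le[of "\<lambda>_. 0" 0 C \<sigma>] by simp
next
  case False
  have inv: "inverse c * c = 1"
    using ennreal_divide_self[OF False] assms by (simp add: divide_ennreal_def mult.commute)
  have "c * awp C g \<sigma> = c * awp C (\<lambda>\<tau>. inverse c * (c * g \<tau>)) \<sigma>"
    by (simp add: inv flip: mult.assoc)
  also have "\<dots> \<le> c * (inverse c * awp C (\<lambda>\<tau>. c * g \<tau>) \<sigma>)"
    by (intro mult_left_mono awp_scale_le) simp
  also have "\<dots> = awp C (\<lambda>\<tau>. c * g \<tau>) \<sigma>"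
    by (metis inv mult.assoc mult.commute mult_1)
  finally show ?thesis
    using awp_scale_le by (rule antisym[rotated])
qed

lemma awp_add_le: "awp C (\<lambda>\<tau>. g \<tau> + h \<tau>) \<sigma> \<le> awp C g \<sigma> + awp C h \<sigma>"
proof (induction C arbitrary: g h \<sigma>)
  case (Seq C1 C2)
  have "awp C1 (awp C2 (\<lambda>\<tau>. g \<tau> + h \<tau>)) \<sigma> \<le> awp C1 (\<lambda>\<tau>. awp C2 g \<tau> + awp C2 h \<tau>) \<sigma>"
    using Seq.IH(2) by (rule awp_mono)
  also have "\<dots> \<le> awp C1 (awp C2 g) \<sigma> + awp C1 (awp C2 h) \<sigma>"
    by (rule Seq.IH(1))
  finally show ?case by simp
next
  case (GChoice \<phi>1 C1 \<phi>2 C2)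
  have "iver \<phi>1 \<sigma> * awp C1 (\<lambda>\<tau>. g \<tau> + h \<tau>) \<sigma> \<le> iver \<phi>1 \<sigma> * awp C1 g \<sigma> + iver \<phi>1 \<sigma> * awp C1 h \<sigma>"
    and "iver \<phi>2 \<sigma> * awp C2 (\<lambda>\<tau>. g \<tau> + h \<tau>) \<sigma> \<le> iver \<phi>2 \<sigma> * awp C2 g \<sigma> + iver \<phi>2 \<sigma> * awp C2 h \<sigma>"
    using GChoice.IH[of g h \<sigma>] by (simp_all add: iver_def)
  then show ?case
    by simp (meson order_trans add_mono max.cobounded1 max.cobounded2)
next
  case (PChoice C1 p C2)
  then have "awp (PChoice C1 p C2) (\<lambda>\<tau>. g \<tau> + h \<tau>) \<sigma>
      \<le> pr p \<sigma> * (awp C1 g \<sigma> + awp C1 h \<sigma>) + npr p \<sigma> * (awp C2 g \<sigma> + awp C2 h \<sigma>)"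
    by (simp add: add_mono mult_left_mono)
  then show ?case by (simp add: distrib_left add_ac)
next
  case (While \<phi> C I)
  let ?Lg = "lfp (awp_char \<phi> C g)" and ?Lh = "lfp (awp_char \<phi> C h)"
  have "lfp (awp_char \<phi> C (\<lambda>\<tau>. g \<tau> + h \<tau>)) \<le> (\<lambda>\<sigma>. ?Lg \<sigma> + ?Lh \<sigma>)"
  proof (rule lfp_lowerbound, rule le_funI)
    fix \<sigma>
    show "awp_char \<phi> C (\<lambda>\<tau>. g \<tau> + h \<tau>) (\<lambda>\<sigma>. ?Lg \<sigma> + ?Lh \<sigma>) \<sigma> \<le> ?Lg \<sigma> + ?Lh \<sigma>"
      using While.IH[of ?Lg ?Lh \<sigma>] lfp_awp_char_unfold[of \<phi> C g \<sigma>] lfp_awp_char_unfold[of \<phi> C h \<sigma>]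
      by (simp add: awp_char_apply)
  qed
  then show ?case by (simp add: awp_While le_fun_def)
qed (auto simp: subst_def)

lemma awp_le_ert: "awp C t \<sigma> \<le> ert C t \<sigma>"
proof (induction C arbitrary: t \<sigma>)
  case (Seq C1 C2)
  have "awp C1 (awp C2 t) \<sigma> \<le> awp C1 (ert C2 t) \<sigma>"
    using Seq.IH(2) by (rule awp_mono)
  also have "\<dots> \<le> ert C1 (ert C2 t) \<sigma>"
    by (rule Seq.IH(1))
  finally show ?case by simp
next
  case (GChoice \<phi>1 C1 \<phi>2 C2)
  have "awp C1 t \<sigma> \<le> ert C1 t \<sigma>" "awp C2 t \<sigma> \<le> ert C2 t \<sigma>"
    by (fact GChoice.IH)+
  then have "awp (GChoice \<phi>1 C1 \<phi>2 C2) t \<sigma> \<le> max (iver \<phi>1 \<sigma> * ert C1 t \<sigma>) (iver \<phi>2 \<sigma> * ert C2 t \<sigma>)"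
    by (simp only: awp.simps) (metis max.mono mult_left_mono zero_le)
  then show ?case by (simp add: add_increasing)
next
  case (PChoice C1 p C2)
  then have "awp (PChoice C1 p C2) t \<sigma> \<le> pr p \<sigma> * ert C1 t \<sigma> + npr p \<sigma> * ert C2 t \<sigma>"
    by (simp add: add_mono mult_left_mono)
  then show ?case by (simp add: add_increasing)
next
  case (While \<phi> C I)
  let ?E = "ert (While \<phi> C I) t"
  have "lfp (awp_char \<phi> C t) \<le> ?E"
  proof (rule lfp_lowerbound, rule le_funI)
    fix \<sigma>
    show "awp_char \<phi> C t ?E \<sigma> \<le> ?E \<sigma>"
      using While.IH[of ?E \<sigma>] lfp_ert_char_unfold[of \<phi> C t \<sigma>]
      by (simp add: awp_char_apply ert_While add_increasing)
  qed
  then show ?case by (simp add: awp_While le_fun_def)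
qed (auto simp: subst_def add_increasing)

lemma dwp_le_awp: "wf_prog C \<Longrightarrow> dwp C g \<sigma> \<le> awp C g \<sigma>"
proof (induction C arbitrary: g \<sigma>)
  case (Seq C1 C2)
  then have "dwp C1 (dwp C2 g) \<sigma> \<le> dwp C1 (awp C2 g) \<sigma>"
    by (intro dwp_mono) simp
  also have "\<dots> \<le> awp C1 (awp C2 g) \<sigma>"
    using Seq by simp
  finally show ?case by simp
next
  case (GChoice \<phi>1 C1 \<phi>2 C2)
  then have "\<phi>1 \<sigma> \<or> \<phi>2 \<sigma>" "dwp C1 g \<sigma> \<le> awp C1 g \<sigma>" "dwp C2 g \<sigma> \<le> awp C2 g \<sigma>"
    by auto
  then show ?case by (auto simp: guardto_def min_le_iff_disj le_max_iff_disj)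
next
  case (PChoice C1 p C2)
  then show ?case by (simp add: add_mono mult_left_mono)
next
  case (While \<phi> C I)
  have "lfp (dwp_char \<phi> C g) \<le> lfp (awp_char \<phi> C g)"
    using While by (intro lfp_mono) (simp add: dwp_char_apply awp_char_apply le_fun_def)
  then show ?case by (simp add: dwp_While awp_While le_fun_def)
qed auto

primrec deterministic :: "prog \<Rightarrow> bool" where
  "deterministic Skip = True"
| "deterministic (Assign x E) = True"
| "deterministic (Seq C1 C2) = (deterministic C1 \<and> deterministic C2)"
| "deterministic (GChoice \<phi>1 C1 \<phi>2 C2) =
     ((\<forall>\<sigma>. \<not> (\<phi>1 \<sigma> \<and> \<phi>2 \<sigma>)) \<and> deterministic C1 \<and> deterministic C2)"
| "deterministic (PChoice C1 p C2) = (deterministic C1 \<and> deterministic C2)"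
| "deterministic (While \<phi> C I) = deterministic C"

primrec determinize :: "prog \<Rightarrow> prog" where
  "determinize Skip = Skip"
| "determinize (Assign x E) = Assign x E"
| "determinize (Seq C1 C2) = Seq (determinize C1) (determinize C2)"
| "determinize (GChoice \<phi>1 C1 \<phi>2 C2) =
     GChoice \<phi>1 (determinize C1) (\<lambda>\<sigma>. \<phi>2 \<sigma> \<and> \<not> \<phi>1 \<sigma>) (determinize C2)"
| "determinize (PChoice C1 p C2) = PChoice (determinize C1) p (determinize C2)"
| "determinize (While \<phi> C I) = While \<phi> (determinize C) I"

lemma deterministic_determinize: "deterministic (determinize C)"
  by (induction C) auto

lemma lfp_awp_char_add_ge:
  assumes add_ge: "\<And>g h \<sigma>. awp C g \<sigma> + awp C h \<sigma> \<le> awp C (\<lambda>\<tau>. g \<tau> + h \<tau>) \<sigma>"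
  shows "lfp (awp_char \<phi> C g) \<sigma> + lfp (awp_char \<phi> C h) \<sigma> \<le> lfp (awp_char \<phi> C (\<lambda>\<tau>. g \<tau> + h \<tau>)) \<sigma>"
proof -
  let ?Lh = "lfp (awp_char \<phi> C h)" and ?L = "lfp (awp_char \<phi> C (\<lambda>\<tau>. g \<tau> + h \<tau>))"
  have "?Lh \<le> ?L"
    by (intro lfp_mono) (simp add: awp_char_apply le_fun_def)
  have "\<forall>\<sigma>. ?Lh \<sigma> + lfp (awp_char \<phi> C g) \<sigma> \<le> ?L \<sigma>"
  proof (induction rule: lfp_ordinal_induct[where P = "\<lambda>S. \<forall>\<sigma>. ?Lh \<sigma> + S \<sigma> \<le> ?L \<sigma>",
        OF mono_awp_char])
    case (1 S)
    show ?case
    proof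
      fix \<sigma>
      show "?Lh \<sigma> + awp_char \<phi> C g S \<sigma> \<le> ?L \<sigma>"
      proof (cases "\<phi> \<sigma>")
        case True
        have "awp C ?Lh \<sigma> + awp C S \<sigma> \<le> awp C (\<lambda>\<tau>. ?Lh \<tau> + S \<tau>) \<sigma>"
          by (rule add_ge)
        also have "\<dots> \<le> awp C ?L \<sigma>"
          using "1"(1) by (intro awp_mono) simp
        finally show ?thesis
          using True lfp_awp_char_unfold[of \<phi> C h \<sigma>] lfp_awp_char_unfold[of \<phi> C "\<lambda>\<tau>. g \<tau> + h \<tau>" \<sigma>]
          by (simp add: awp_char_apply)
      next
        case False
        then show ?thesis
          using lfp_awp_char_unfold[of \<phi> C h \<sigma>] lfp_awp_char_unfold[of \<phi> C "\<lambda>\<tau>. g \<tau> + h \<tau>" \<sigma>]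
          by (simp add: awp_char_apply add.commute)
      qed
    qed
  next
    case (2 M)
    then show ?case
      using \<open>?Lh \<le> ?L\<close> by (auto simp: le_fun_def intro!: ennreal_add_SUP_le)
  qed
  then show ?thesis
    by (simp add: add.commute)
qed

lemma awp_add_ge:
  "deterministic C \<Longrightarrow> awp C g \<sigma> + awp C h \<sigma> \<le> awp C (\<lambda>\<tau>. g \<tau> + h \<tau>) \<sigma>"
proof (induction C arbitrary: g h \<sigma>)
  case (Seq C1 C2)
  then have "awp C1 (awp C2 g) \<sigma> + awp C1 (awp C2 h) \<sigma> \<le> awp C1 (\<lambda>\<tau>. awp C2 g \<tau> + awp C2 h \<tau>) \<sigma>"
    by simp
  also have "\<dots> \<le> awp C1 (awp C2 (\<lambda>\<tau>. g \<tau> + h \<tau>)) \<sigma>"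
    using Seq by (intro awp_mono) simp
  finally show ?case by simp
next
  case (GChoice \<phi>1 C1 \<phi>2 C2)
  then show ?case by (cases "\<phi>1 \<sigma>"; cases "\<phi>2 \<sigma>") auto
next
  case (PChoice C1 p C2)
  then have "pr p \<sigma> * (awp C1 g \<sigma> + awp C1 h \<sigma>) + npr p \<sigma> * (awp C2 g \<sigma> + awp C2 h \<sigma>)
      \<le> awp (PChoice C1 p C2) (\<lambda>\<tau>. g \<tau> + h \<tau>) \<sigma>"
    by (simp add: add_mono mult_left_mono)
  then show ?case by (simp add: distrib_left add_ac)
next
  case (While \<phi> C I)
  then show ?case by (simp add: awp_While lfp_awp_char_add_ge)
qed (auto simp: subst_def)

(* Contains impl (impl_prog_refines), but is defined by structural recursion, so that a
   refinement of a compound program can be inverted by simp. *)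
fun prog_refines :: "prog \<Rightarrow> prog \<Rightarrow> bool" where
  "prog_refines Skip Skip = True"
| "prog_refines (Assign x E) (Assign y F) = (x = y \<and> E = F)"
| "prog_refines (Seq C1' C2') (Seq C1 C2) = (prog_refines C1' C1 \<and> prog_refines C2' C2)"
| "prog_refines (GChoice \<phi>1' C1' \<phi>2' C2') (GChoice \<phi>1 C1 \<phi>2 C2) =
     ((\<forall>\<sigma>. \<phi>1' \<sigma> \<longrightarrow> \<phi>1 \<sigma>) \<and> (\<forall>\<sigma>. \<phi>2' \<sigma> \<longrightarrow> \<phi>2 \<sigma>) \<and> (\<forall>\<sigma>. \<phi>1' \<sigma> \<or> \<phi>2' \<sigma>) \<and>
      prog_refines C1' C1 \<and> prog_refines C2' C2)"
| "prog_refines (PChoice C1' p' C2') (PChoice C1 p C2) =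
     (p' = p \<and> prog_refines C1' C1 \<and> prog_refines C2' C2)"
| "prog_refines (While \<phi>' C' I') (While \<phi> C I) = (\<phi>' = \<phi> \<and> I' = I \<and> prog_refines C' C)"
| "prog_refines _ _ = False"

lemma prog_refines_refl: "wf_prog C \<Longrightarrow> prog_refines C C"
  by (induction C) auto

lemma prog_refines_wf_prog: "prog_refines C' C \<Longrightarrow> wf_prog C'"
  by (induction C' C rule: prog_refines.induct) auto

lemma prog_refines_trans: "prog_refines C1 C2 \<Longrightarrow> prog_refines C2 C3 \<Longrightarrow> prog_refines C1 C3"
proof (induction C1 arbitrary: C2 C3)
  case Skip
  then show ?case by (cases C2; cases C3) auto
next
  case (Assign x E)
  then show ?case by (cases C2; cases C3) auto
next
  case (Seq D1 D2)
  then show ?case by (cases C2; cases C3) auto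
next
  case (GChoice \<phi>1 D1 \<phi>2 D2)
  then show ?case by (cases C2; cases C3) auto
next
  case (PChoice D1 p D2)
  then show ?case by (cases C2; cases C3) auto
next
  case (While \<phi> D I)
  then show ?case by (cases C2; cases C3) auto
qed

lemma impl_prog_refines: "impl C' C \<Longrightarrow> prog_refines C' C"
  by (induction rule: impl.induct) (auto intro: prog_refines_refl prog_refines_trans)

lemma trans_awp_prog_refines: "wf_prog C \<Longrightarrow> prog_refines (trans_awp C f) C"
  by (induction C arbitrary: f) (auto simp: succeq_def intro: prog_refines_refl)

lemma determinize_prog_refines: "wf_prog C \<Longrightarrow> prog_refines (determinize C) C"
  by (induction C) auto

lemma awp_star_prog_refines_trans_awp:
  "prog_refines C' (trans_awp C f) \<Longrightarrow> awp_star C' f = awp_star C f"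
proof (induction C arbitrary: C' f)
  case Skip
  then show ?case by (cases C') auto
next
  case (Assign x E)
  then show ?case by (cases C') auto
next
  case (Seq C1 C2)
  then show ?case by (cases C') auto
next
  case (GChoice \<phi>1 C1 \<phi>2 C2)
  then obtain \<psi>1 D1 \<psi>2 D2 where C': "C' = GChoice \<psi>1 D1 \<psi>2 D2"
    and guards: "\<forall>\<sigma>. \<psi>1 \<sigma> \<longrightarrow> \<phi>1 \<sigma> \<and> (\<phi>2 \<sigma> \<longrightarrow> awp_star C2 f \<sigma> \<le> awp_star C1 f \<sigma>)"
      "\<forall>\<sigma>. \<psi>2 \<sigma> \<longrightarrow> \<phi>2 \<sigma> \<and> (\<phi>1 \<sigma> \<longrightarrow> awp_star C1 f \<sigma> \<le> awp_star C2 f \<sigma>)"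
      "\<forall>\<sigma>. \<psi>1 \<sigma> \<or> \<psi>2 \<sigma>"
    and "prog_refines D1 (trans_awp C1 f)" "prog_refines D2 (trans_awp C2 f)"
    by (cases C') (auto simp: succeq_def)
  then have "awp_star D1 f = awp_star C1 f" "awp_star D2 f = awp_star C2 f"
    using GChoice.IH by blast+
  then show ?case
    using guards by (auto simp: C' iver_def max_def fun_eq_iff)
next
  case (PChoice C1 p C2)
  then show ?case by (cases C') auto
next
  case (While \<phi> C I)
  then show ?case by (cases C') auto
qed

lemma awp_prog_refines_le: "prog_refines C' C \<Longrightarrow> awp C' g \<sigma> \<le> awp C g \<sigma>"
proof (induction C' C arbitrary: g \<sigma> rule: prog_refines.induct)
  case (3 C1' C2' C1 C2)
  then have "awp C1' (awp C2' g) \<sigma> \<le> awp C1' (awp C2 g) \<sigma>"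
    by (intro awp_mono) simp
  also have "\<dots> \<le> awp C1 (awp C2 g) \<sigma>"
    using 3 by simp
  finally show ?case by simp
next
  case (4 \<phi>1' C1' \<phi>2' C2' \<phi>1 C1 \<phi>2 C2)
  then have "iver \<phi>1' \<sigma> * awp C1' g \<sigma> \<le> iver \<phi>1 \<sigma> * awp C1 g \<sigma>"
    and "iver \<phi>2' \<sigma> * awp C2' g \<sigma> \<le> iver \<phi>2 \<sigma> * awp C2 g \<sigma>"
    by (auto simp: iver_def)
  then show ?case unfolding awp.simps by (rule max.mono)
next
  case (5 C1' p' C2' C1 p C2)
  then show ?case by (simp add: add_mono mult_left_mono)
next
  case (6 \<phi>' C' I' \<phi> C I)
  then have "lfp (awp_char \<phi> C' g) \<le> lfp (awp_char \<phi> C g)"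
    by (intro lfp_mono) (simp add: awp_char_apply le_fun_def)
  with 6 show ?case by (simp add: awp_While le_fun_def)
qed auto

lemma ert_prog_refines_le: "prog_refines C' C \<Longrightarrow> ert C' t \<sigma> \<le> ert C t \<sigma>"
proof (induction C' C arbitrary: t \<sigma> rule: prog_refines.induct)
  case (3 C1' C2' C1 C2)
  then have "ert C1' (ert C2' t) \<sigma> \<le> ert C1' (ert C2 t) \<sigma>"
    by (intro ert_mono) simp
  also have "\<dots> \<le> ert C1 (ert C2 t) \<sigma>"
    using 3 by simp
  finally show ?case by simp
next
  case (4 \<phi>1' C1' \<phi>2' C2' \<phi>1 C1 \<phi>2 C2)
  then have "iver \<phi>1' \<sigma> * ert C1' t \<sigma> \<le> iver \<phi>1 \<sigma> * ert C1 t \<sigma>"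
    and "iver \<phi>2' \<sigma> * ert C2' t \<sigma> \<le> iver \<phi>2 \<sigma> * ert C2 t \<sigma>"
    by (auto simp: iver_def)
  then show ?case unfolding ert.simps by (intro add_left_mono max.mono)
next
  case (5 C1' p' C2' C1 p C2)
  then show ?case by (simp add: add_mono mult_left_mono)
next
  case (6 \<phi>' C' I' \<phi> C I)
  then have "lfp (ert_char \<phi> C' t) \<le> lfp (ert_char \<phi> C t)"
    by (intro lfp_mono) (simp add: ert_char_apply le_fun_def add_left_mono)
  with 6 show ?case by (simp add: ert_While le_fun_def)
qed auto

lemma dwp_prog_refines_ge: "prog_refines C' C \<Longrightarrow> dwp C g \<sigma> \<le> dwp C' g \<sigma>"
proof (induction C' C arbitrary: g \<sigma> rule: prog_refines.induct)
  case (3 C1' C2' C1 C2)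
  then have "dwp C1 (dwp C2 g) \<sigma> \<le> dwp C1 (dwp C2' g) \<sigma>"
    by (intro dwp_mono) simp
  also have "\<dots> \<le> dwp C1' (dwp C2' g) \<sigma>"
    using 3 by simp
  finally show ?case by simp
next
  case (4 \<phi>1' C1' \<phi>2' C2' \<phi>1 C1 \<phi>2 C2)
  then have "guardto \<phi>1 (dwp C1 g) \<sigma> \<le> guardto \<phi>1' (dwp C1' g) \<sigma>"
    and "guardto \<phi>2 (dwp C2 g) \<sigma> \<le> guardto \<phi>2' (dwp C2' g) \<sigma>"
    by (auto simp: guardto_def)
  then show ?case unfolding dwp.simps by (rule min.mono)
next
  case (5 C1' p' C2' C1 p C2)
  then show ?case by (simp add: add_mono mult_left_mono)
next
  case (6 \<phi>' C' I' \<phi> C I)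
  then have "lfp (dwp_char \<phi> C g) \<le> lfp (dwp_char \<phi> C' g)"
    by (intro lfp_mono) (simp add: dwp_char_apply le_fun_def)
  with 6 show ?case by (simp add: dwp_While le_fun_def)
qed auto

lemma dAST_prog_refines:
  assumes "prog_refines C' C" and "dAST C"
  shows "dAST C'"
proof -
  have "dwp C' (\<lambda>_. 1) \<sigma> = 1" for \<sigma>
  proof (rule antisym)
    have "dwp C' (\<lambda>_. 1) \<sigma> \<le> awp C' (\<lambda>_. 1) \<sigma>"
      by (rule dwp_le_awp[OF prog_refines_wf_prog[OF assms(1)]])
    also have "\<dots> \<le> 1"
      by (rule awp_const_le) simp
    finally show "dwp C' (\<lambda>_. 1) \<sigma> \<le> 1" .
    have "1 = dwp C (\<lambda>_. 1) \<sigma>"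
      using assms(2) by (simp add: dAST_def)
    also have "\<dots> \<le> dwp C' (\<lambda>_. 1) \<sigma>"
      using assms(1) by (rule dwp_prog_refines_ge)
    finally show "1 \<le> dwp C' (\<lambda>_. 1) \<sigma>" .
  qed
  then show ?thesis
    by (simp add: dAST_def fun_eq_iff)
qed

lemma dPAST_prog_refines: "prog_refines C' C \<Longrightarrow> dPAST C \<Longrightarrow> dPAST C'"
  unfolding dPAST_def using ert_prog_refines_le le_less_trans by blast

lemma suitable_OST_prog_refines:
  assumes "prog_refines C' C" and "suitable_OST (While \<phi> C I) f"
  shows "suitable_OST (While \<phi> C' I) f"
proof -
  have awp_le: "iver \<phi> \<sigma> * awp C' g \<sigma> \<le> iver \<phi> \<sigma> * awp C g \<sigma>" for g \<sigma>
    using assms(1) by (intro mult_left_mono awp_prog_refines_le) simp_all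
  then have sum_le: "iver \<phi> \<sigma> * awp C' I \<sigma> + iver (\<lambda>\<tau>. \<not> \<phi> \<tau>) \<sigma> * f \<sigma>
      \<le> iver \<phi> \<sigma> * awp C I \<sigma> + iver (\<lambda>\<tau>. \<not> \<phi> \<tau>) \<sigma> * f \<sigma>" for \<sigma>
    by (rule add_right_mono)
  from assms(2) obtain I' b where "I = (\<lambda>\<sigma>. iver \<phi> \<sigma> * I' \<sigma> + iver (\<lambda>\<tau>. \<not> \<phi> \<tau>) \<sigma> * f \<sigma>)"
    and "\<forall>\<sigma>. f \<sigma> < \<infinity> \<and> I \<sigma> < \<infinity> \<and>
      iver \<phi> \<sigma> * awp C I \<sigma> + iver (\<lambda>\<tau>. \<not> \<phi> \<tau>) \<sigma> * f \<sigma> < \<infinity>"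
    and "0 \<le> b" and "\<forall>\<sigma>. iver \<phi> \<sigma> * awp C (\<lambda>\<tau>. absdiff (I \<tau>) (I \<sigma>)) \<sigma> \<le> ennreal b"
    unfolding suitable_OST.simps by blast
  with awp_le sum_le show ?thesis
    unfolding suitable_OST.simps by (blast intro: le_less_trans order_trans)
qed

section \<open>Finite expected runtime implies termination\<close>

lemma of_nat_le_add_mult_downclosed:
  fixes k m :: ennreal
  assumes "j \<le> n" and "of_nat n \<le> k + of_nat n * m"
  shows "of_nat j \<le> k + of_nat j * m"
proof (cases "1 \<le> m")
  case True
  then have "of_nat j \<le> of_nat j * m"
    using mult_left_mono[of 1 m "of_nat j"] by simp
  then show ?thesis by (simp add: add_increasing)
next
  case False
  obtain d where n: "n = j + d"
    using \<open>j \<le> n\<close> le_Suc_ex by blast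
  have "of_nat d + of_nat j = (of_nat n :: ennreal)"
    by (simp add: n)
  also have "\<dots> \<le> k + of_nat n * m"
    by (fact assms(2))
  also have "\<dots> = of_nat d * m + (k + of_nat j * m)"
    by (simp add: n distrib_right add_ac)
  also have "\<dots> \<le> of_nat d + (k + of_nat j * m)"
    using False mult_left_mono[of m 1 "of_nat d"] by (intro add_right_mono) simp
  finally show ?thesis
    by (simp add: ennreal_add_left_cancel_le)
qed

lemma ennreal_one_le_if_of_nat_le:
  fixes a R :: ennreal
  assumes bound: "\<And>n. of_nat n \<le> R + of_nat n * a" and "R < \<infinity>"
  shows "1 \<le> a"
proof (rule ccontr)
  assume "\<not> 1 \<le> a"
  then obtain r where r: "a = ennreal r" "0 \<le> r" "r < 1"
    using less_top_ennreal ennreal_less_iff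
    by (metis ennreal_1 ennreal_one_less_top linorder_not_le order.strict_trans)
  obtain k where k: "R = ennreal k" "0 \<le> k"
    using \<open>R < \<infinity>\<close> less_top_ennreal by auto
  define n where "n = nat \<lceil>k / (1 - r)\<rceil> + 1"
  have "k / (1 - r) < real n"
    unfolding n_def by linarith
  then have "k < real n * (1 - r)"
    using r by (simp add: divide_less_eq)
  have "ennreal (real n) \<le> ennreal (k + real n * r)"
    using bound[of n] k r by (simp add: ennreal_mult ennreal_of_nat_eq_real_of_nat ennreal_plus)
  then have "real n \<le> k + real n * r"
    using k r by (subst (asm) ennreal_le_iff) auto
  with \<open>k < real n * (1 - r)\<close> show False
    by (simp add: algebra_simps)
qed

lemma of_nat_le_lfp_ert_char_plus_awp_char:
  assumes body: "\<And>n k m \<sigma>. (\<And>\<tau>. of_nat n \<le> k \<tau> + of_nat n * m \<tau>) \<Longrightarrow>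
      of_nat n \<le> ert C k \<sigma> + of_nat n * awp C m \<sigma>"
    and post: "\<And>\<tau>. of_nat n \<le> k \<tau> + of_nat n * m \<tau>"
  shows "of_nat n \<le> lfp (ert_char \<phi> C k) \<sigma> + of_nat n * lfp (awp_char \<phi> C m) \<sigma>"
proof -
  let ?R = "lfp (ert_char \<phi> C k)" and ?A = "lfp (awp_char \<phi> C m)"
  have "\<forall>\<sigma>. of_nat j \<le> ?R \<sigma> + of_nat j * ?A \<sigma>" if "j \<le> n" for j
    using that
  proof (induction j)
    case (Suc j)
    then have IH: "\<And>\<tau>. of_nat j \<le> ?R \<tau> + of_nat j * ?A \<tau>"
      by simp
    show ?case
    proof
      fix \<sigma>
      have "of_nat (Suc j) \<le> ?R \<sigma> + of_nat j * ?A \<sigma>"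
      proof (cases "\<phi> \<sigma>")
        case True
        have "of_nat j \<le> ert C ?R \<sigma> + of_nat j * awp C ?A \<sigma>"
          using IH by (rule body)
        \<comment> \<open>the iteration costs one time unit, which pays for the step from j to Suc j\<close>
        then show ?thesis
          using True lfp_ert_char_unfold[of \<phi> C k \<sigma>] lfp_awp_char_unfold[of \<phi> C m \<sigma>]
          by (simp add: add.assoc add_left_mono)
      next
        case False
        have "j \<le> n"
          using Suc.prems by simp
        then have "of_nat j \<le> k \<sigma> + of_nat j * m \<sigma>"
          using post by (rule of_nat_le_add_mult_downclosed)
        then show ?thesis
          using False lfp_ert_char_unfold[of \<phi> C k \<sigma>] lfp_awp_char_unfold[of \<phi> C m \<sigma>]
          by (simp add: add.assoc add_left_mono)
      qed
      also have "\<dots> \<le> ?R \<sigma> + of_nat (Suc j) * ?A \<sigma>"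
        by (intro add_left_mono mult_right_mono) simp_all
      finally show "of_nat (Suc j) \<le> ?R \<sigma> + of_nat (Suc j) * ?A \<sigma>" .
    qed
  qed simp
  then show ?thesis
    by simp
qed

(* For k = 0 and m = 1 this is n <= ert C 0 + n * awp C 1; arbitrary k and m are needed
   to make the statement compositional. *)
lemma of_nat_le_ert_plus_awp:
  "wf_prog C \<Longrightarrow> (\<And>\<tau>. of_nat n \<le> k \<tau> + of_nat n * m \<tau>) \<Longrightarrow>
    of_nat n \<le> ert C k \<sigma> + of_nat n * awp C m \<sigma>"
proof (induction C arbitrary: n k m \<sigma>)
  case Skip
  then show ?case by (simp add: add_increasing add.assoc)
next
  case (Assign x E)
  then show ?case by (simp add: subst_def add_increasing add.assoc)
next
  case (Seq C1 C2)
  then show ?case by simp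
next
  case (GChoice \<phi>1 C1 \<phi>2 C2)
  let ?G = "GChoice \<phi>1 C1 \<phi>2 C2"
  have branch: "of_nat n \<le> ert ?G k \<sigma> + of_nat n * awp ?G m \<sigma>"
    if "of_nat n \<le> ert D k \<sigma> + of_nat n * awp D m \<sigma>"
      and "ert D k \<sigma> \<le> ert ?G k \<sigma>" and "awp D m \<sigma> \<le> awp ?G m \<sigma>" for D
    using that by (meson add_mono mult_left_mono order_trans zero_le)
  have "\<phi>1 \<sigma> \<or> \<phi>2 \<sigma>"
    using GChoice.prems(1) by simp
  then show ?case
  proof
    assume "\<phi>1 \<sigma>"
    with GChoice show ?thesis
      by (intro branch[of C1]) (simp_all add: add_increasing)
  next
    assume "\<phi>2 \<sigma>"
    with GChoice show ?thesis
      by (intro branch[of C2]) (simp_all add: add_increasing)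
  qed
next
  case (PChoice C1 p C2)
  have "of_nat n = pr p \<sigma> * of_nat n + npr p \<sigma> * of_nat n"
    by (simp add: pr_plus_npr flip: distrib_right)
  also have "\<dots> \<le> pr p \<sigma> * (ert C1 k \<sigma> + of_nat n * awp C1 m \<sigma>)
      + npr p \<sigma> * (ert C2 k \<sigma> + of_nat n * awp C2 m \<sigma>)"
    using PChoice by (intro add_mono mult_left_mono) simp_all
  also have "\<dots> = (pr p \<sigma> * ert C1 k \<sigma> + npr p \<sigma> * ert C2 k \<sigma>)
      + of_nat n * (pr p \<sigma> * awp C1 m \<sigma> + npr p \<sigma> * awp C2 m \<sigma>)"
    by (simp add: algebra_simps)
  also have "\<dots> \<le> ert (PChoice C1 p C2) k \<sigma> + of_nat n * awp (PChoice C1 p C2) m \<sigma>"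
    by (simp add: add_increasing)
  finally show ?case .
next
  case (While \<phi> C I)
  then show ?case
    by (simp add: ert_While awp_While of_nat_le_lfp_ert_char_plus_awp_char)
qed

lemma one_le_awp_one_if_ert_finite:
  "wf_prog C \<Longrightarrow> ert C (\<lambda>_. 0) \<sigma> < \<infinity> \<Longrightarrow> 1 \<le> awp C (\<lambda>_. 1) \<sigma>"
  by (rule ennreal_one_le_if_of_nat_le[where R = "ert C (\<lambda>_. 0) \<sigma>"])
    (simp_all add: of_nat_le_ert_plus_awp)

lemma one_le_awp_one_if_dAST: "wf_prog C \<Longrightarrow> dAST C \<Longrightarrow> 1 \<le> awp C (\<lambda>_. 1) \<sigma>"
  unfolding dAST_def by (metis dwp_le_awp)

section \<open>Loop rules for deterministic bodies\<close>

lemma subinvariant_awp_char: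
  assumes "\<And>\<sigma>. I \<sigma> \<le> iver \<phi> \<sigma> * awp_star C I \<sigma> + iver (\<lambda>\<tau>. \<not> \<phi> \<tau>) \<sigma> * f \<sigma>"
    and "\<And>\<sigma>. awp_star C I \<sigma> \<le> awp C I \<sigma>"
  shows "I \<sigma> \<le> awp_char \<phi> C f I \<sigma>"
  using assms[of \<sigma>] by (cases "\<phi> \<sigma>") (auto simp: awp_char_apply intro: order_trans)

lemma subinvariant_plus_bound_le:
  assumes det: "deterministic C"
    and sub: "\<And>\<sigma>. I \<sigma> \<le> awp_char \<phi> C f I \<sigma>"
    and bounded: "\<And>\<sigma>. I \<sigma> \<le> ennreal b"
  shows "I \<sigma> + ennreal b * lfp (awp_char \<phi> C (\<lambda>_. 1)) \<sigma> \<le> lfp (awp_char \<phi> C f) \<sigma> + ennreal b"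
proof -
  let ?L = "lfp (awp_char \<phi> C f)" and ?b = "ennreal b"
  have "\<forall>\<sigma>. I \<sigma> + ?b * lfp (awp_char \<phi> C (\<lambda>_. 1)) \<sigma> \<le> ?L \<sigma> + ?b"
  proof (induction rule: lfp_ordinal_induct[where P = "\<lambda>S. \<forall>\<sigma>. I \<sigma> + ?b * S \<sigma> \<le> ?L \<sigma> + ?b",
        OF mono_awp_char])
    case (1 S)
    show ?case
    proof
      fix \<sigma>
      show "I \<sigma> + ?b * awp_char \<phi> C (\<lambda>_. 1) S \<sigma> \<le> ?L \<sigma> + ?b"
      proof (cases "\<phi> \<sigma>")
        case True
        have "I \<sigma> + ?b * awp C S \<sigma> \<le> awp C I \<sigma> + awp C (\<lambda>\<tau>. ?b * S \<tau>) \<sigma>"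
          using True sub[of \<sigma>] by (intro add_mono) (simp_all add: awp_char_apply awp_scale)
        also have "\<dots> \<le> awp C (\<lambda>\<tau>. I \<tau> + ?b * S \<tau>) \<sigma>"
          using det by (rule awp_add_ge)
        also have "\<dots> \<le> awp C (\<lambda>\<tau>. ?L \<tau> + ?b) \<sigma>"
          using "1"(1) by (intro awp_mono) simp
        also have "\<dots> \<le> awp C ?L \<sigma> + awp C (\<lambda>_. ?b) \<sigma>"
          by (rule awp_add_le)
        also have "\<dots> \<le> awp C ?L \<sigma> + ?b"
          by (intro add_left_mono awp_const_le) simp
        finally show ?thesis
          using True lfp_awp_char_unfold[of \<phi> C f \<sigma>] by (simp add: awp_char_apply)
      next
        case False
        then show ?thesis
          using sub[of \<sigma>] lfp_awp_char_unfold[of \<phi> C f \<sigma>] by (simp add: awp_char_apply)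
      qed
    qed
  next
    case (2 M)
    then show ?case
      using bounded
      by (auto simp: SUP_mult_left_ennreal image_image add_increasing intro!: ennreal_add_SUP_le)
  qed
  then show ?thesis
    by blast
qed

lemma bounded_subinvariant_le_lfp_awp_char:
  assumes det: "deterministic C"
    and sub: "\<And>\<sigma>. I \<sigma> \<le> awp_char \<phi> C f I \<sigma>"
    and bounded: "\<And>\<sigma>. I \<sigma> \<le> ennreal b"
    and terminates: "\<And>\<sigma>. 1 \<le> lfp (awp_char \<phi> C (\<lambda>_. 1)) \<sigma>"
  shows "I \<sigma> \<le> lfp (awp_char \<phi> C f) \<sigma>"
proof -
  have "I \<sigma> + ennreal b \<le> I \<sigma> + ennreal b * lfp (awp_char \<phi> C (\<lambda>_. 1)) \<sigma>"
    using terminates[of \<sigma>] mult_left_mono[of 1 _ "ennreal b"] by (intro add_left_mono) simp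
  also have "\<dots> \<le> lfp (awp_char \<phi> C f) \<sigma> + ennreal b"
    using det sub bounded by (rule subinvariant_plus_bound_le)
  finally show ?thesis
    by (simp add: add.commute ennreal_add_left_cancel_le)
qed

lemma absdiff_less_top: "a < \<infinity> \<Longrightarrow> b < \<infinity> \<Longrightarrow> absdiff a b < \<infinity>"
  by (simp add: absdiff_def top.not_eq_extremum[symmetric])

lemma le_add_absdiff: "a \<le> b + absdiff a b"
proof (cases "a \<le> b")
  case True
  then show ?thesis by (simp add: add_increasing2)
next
  case False
  then have "a = b + (a - b)"
    by (simp add: add_diff_inverse_ennreal)
  also have "\<dots> \<le> b + absdiff a b"
    unfolding absdiff_def by (intro add_left_mono) simp
  finally show ?thesis .
qed

(* lfp (variation_char phi C I) c sigma is the expected value of c plus the total variation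
   of I accumulated along the run of the loop from sigma. *)
definition variation_char :: "pred \<Rightarrow> prog \<Rightarrow> expect \<Rightarrow> (ennreal \<Rightarrow> expect) \<Rightarrow> ennreal \<Rightarrow> expect" where
  "variation_char \<phi> C I h c \<sigma> =
     (if \<phi> \<sigma> then awp C (\<lambda>\<tau>. h (c + absdiff (I \<tau>) (I \<sigma>)) \<tau>) \<sigma> else c)"

lemma mono_variation_char: "mono (variation_char \<phi> C I)"
  by (rule monoI) (simp add: variation_char_def le_fun_def awp_mono)

lemma lfp_variation_char_unfold:
  "lfp (variation_char \<phi> C I) c \<sigma> =
     (if \<phi> \<sigma> then awp C (\<lambda>\<tau>. lfp (variation_char \<phi> C I) (c + absdiff (I \<tau>) (I \<sigma>)) \<tau>) \<sigma> else c)"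
  by (subst lfp_unfold[OF mono_variation_char]) (simp add: variation_char_def)

lemma lfp_variation_char_le:
  assumes "\<And>\<sigma>. \<phi> \<sigma> \<Longrightarrow> awp C (\<lambda>\<tau>. absdiff (I \<tau>) (I \<sigma>)) \<sigma> \<le> b"
  shows "lfp (variation_char \<phi> C I) c \<sigma> \<le> c + b * lfp (ert_char \<phi> C (\<lambda>_. 0)) \<sigma>"
proof -
  let ?R = "lfp (ert_char \<phi> C (\<lambda>_. 0))"
  have "lfp (variation_char \<phi> C I) \<le> (\<lambda>c \<sigma>. c + b * ?R \<sigma>)"
  proof (rule lfp_lowerbound, intro le_funI)
    fix c \<sigma>
    show "variation_char \<phi> C I (\<lambda>c \<sigma>. c + b * ?R \<sigma>) c \<sigma> \<le> c + b * ?R \<sigma>"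
    proof (cases "\<phi> \<sigma>")
      case True
      have "awp C (\<lambda>\<tau>. (c + absdiff (I \<tau>) (I \<sigma>)) + b * ?R \<tau>) \<sigma>
          \<le> awp C (\<lambda>\<tau>. c + absdiff (I \<tau>) (I \<sigma>)) \<sigma> + awp C (\<lambda>\<tau>. b * ?R \<tau>) \<sigma>"
        by (rule awp_add_le)
      also have "\<dots> \<le> (awp C (\<lambda>_. c) \<sigma> + awp C (\<lambda>\<tau>. absdiff (I \<tau>) (I \<sigma>)) \<sigma>) + b * awp C ?R \<sigma>"
        by (intro add_mono awp_add_le awp_scale_le)
      also have "\<dots> \<le> (c + b) + b * ert C ?R \<sigma>"
        using True assms awp_const_le[of "\<lambda>_. c" c C \<sigma>] awp_le_ert
        by (intro add_mono mult_left_mono) auto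
      also have "\<dots> = c + b * ?R \<sigma>"
        using True lfp_ert_char_unfold[of \<phi> C "\<lambda>_. 0" \<sigma>] by (simp add: distrib_left add.assoc)
      finally show ?thesis
        using True by (simp add: variation_char_def)
    qed (simp add: variation_char_def)
  qed
  then show ?thesis by (simp add: le_fun_def)
qed

lemma lfp_variation_char_ge:
  assumes finite: "\<And>\<sigma>. I \<sigma> < \<infinity>" and "c < \<infinity>"
  shows "c * lfp (awp_char \<phi> C (\<lambda>_. 1)) \<sigma> \<le> lfp (variation_char \<phi> C I) c \<sigma>"
proof -
  let ?Z = "lfp (variation_char \<phi> C I)"
  have "\<forall>c \<sigma>. c < \<infinity> \<longrightarrow> c * lfp (awp_char \<phi> C (\<lambda>_. 1)) \<sigma> \<le> ?Z c \<sigma>"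
  proof (induction rule: lfp_ordinal_induct[where P = "\<lambda>S. \<forall>c \<sigma>. c < \<infinity> \<longrightarrow> c * S \<sigma> \<le> ?Z c \<sigma>",
        OF mono_awp_char])
    case (1 S)
    show ?case
    proof (intro allI impI)
      fix c :: ennreal and \<sigma>
      assume "c < \<infinity>"
      show "c * awp_char \<phi> C (\<lambda>_. 1) S \<sigma> \<le> ?Z c \<sigma>"
      proof (cases "\<phi> \<sigma>")
        case True
        have "c * awp C S \<sigma> = awp C (\<lambda>\<tau>. c * S \<tau>) \<sigma>"
          using \<open>c < \<infinity>\<close> by (simp add: awp_scale)
        also have "\<dots> \<le> awp C (\<lambda>\<tau>. ?Z (c + absdiff (I \<tau>) (I \<sigma>)) \<tau>) \<sigma>"
        proof (rule awp_mono)
          fix \<tau>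
          have "c + absdiff (I \<tau>) (I \<sigma>) < \<infinity>"
            using \<open>c < \<infinity>\<close> finite absdiff_less_top by (simp add: top.not_eq_extremum[symmetric])
          then have "(c + absdiff (I \<tau>) (I \<sigma>)) * S \<tau> \<le> ?Z (c + absdiff (I \<tau>) (I \<sigma>)) \<tau>"
            using "1"(1) by blast
          then show "c * S \<tau> \<le> ?Z (c + absdiff (I \<tau>) (I \<sigma>)) \<tau>"
            by (meson add_increasing2 mult_right_mono order_trans order_refl zero_le)
        qed
        finally show ?thesis
          using True lfp_variation_char_unfold[of \<phi> C I c \<sigma>] by (simp add: awp_char_apply)
      next
        case False
        then show ?thesis
          using lfp_variation_char_unfold[of \<phi> C I c \<sigma>] by (simp add: awp_char_apply)
      qed
    qed
  next
    case (2 M)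
    then show ?case
      by (auto simp: SUP_mult_left_ennreal image_image intro!: SUP_least)
  qed
  then show ?thesis
    using \<open>c < \<infinity>\<close> by blast
qed

lemma subinvariant_plus_variation_step:
  assumes det: "deterministic C"
    and sub: "\<And>\<sigma>. I \<sigma> \<le> awp_char \<phi> C f I \<sigma>"
    and finite: "\<And>\<sigma>. I \<sigma> < \<infinity>"
    and IH: "\<And>c \<sigma>. c < \<infinity> \<Longrightarrow> I \<sigma> \<le> c \<Longrightarrow>
      I \<sigma> + S c \<sigma> \<le> lfp (awp_char \<phi> C f) \<sigma> + lfp (variation_char \<phi> C I) c \<sigma>"
    and "c < \<infinity>" and "I \<sigma> \<le> c"
  shows "I \<sigma> + variation_char \<phi> C I S c \<sigma> \<le> lfp (awp_char \<phi> C f) \<sigma> + lfp (variation_char \<phi> C I) c \<sigma>"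
proof (cases "\<phi> \<sigma>")
  case True
  let ?L = "lfp (awp_char \<phi> C f)" and ?Z = "lfp (variation_char \<phi> C I)"
  let ?c' = "\<lambda>\<tau>. c + absdiff (I \<tau>) (I \<sigma>)"
  have "I \<sigma> + awp C (\<lambda>\<tau>. S (?c' \<tau>) \<tau>) \<sigma> \<le> awp C I \<sigma> + awp C (\<lambda>\<tau>. S (?c' \<tau>) \<tau>) \<sigma>"
    using True sub[of \<sigma>] by (simp add: awp_char_apply add_right_mono)
  also have "\<dots> \<le> awp C (\<lambda>\<tau>. I \<tau> + S (?c' \<tau>) \<tau>) \<sigma>"
    using det by (rule awp_add_ge)
  also have "\<dots> \<le> awp C (\<lambda>\<tau>. ?L \<tau> + ?Z (?c' \<tau>) \<tau>) \<sigma>"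
  proof (rule awp_mono)
    fix \<tau>
    have "I \<tau> \<le> I \<sigma> + absdiff (I \<tau>) (I \<sigma>)"
      by (rule le_add_absdiff)
    also have "\<dots> \<le> ?c' \<tau>"
      using \<open>I \<sigma> \<le> c\<close> by (rule add_right_mono)
    finally have "I \<tau> \<le> ?c' \<tau>" .
    moreover have "?c' \<tau> < \<infinity>"
      using \<open>c < \<infinity>\<close> finite absdiff_less_top by (simp add: top.not_eq_extremum[symmetric])
    ultimately show "I \<tau> + S (?c' \<tau>) \<tau> \<le> ?L \<tau> + ?Z (?c' \<tau>) \<tau>"
      using IH by blast
  qed
  also have "\<dots> \<le> awp C ?L \<sigma> + awp C (\<lambda>\<tau>. ?Z (?c' \<tau>) \<tau>) \<sigma>"
    by (rule awp_add_le)
  finally show ?thesis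
    using True lfp_awp_char_unfold[of \<phi> C f \<sigma>] lfp_variation_char_unfold[of \<phi> C I c \<sigma>]
    by (simp add: variation_char_def)
next
  case False
  then show ?thesis
    using sub[of \<sigma>] lfp_awp_char_unfold[of \<phi> C f \<sigma>] lfp_variation_char_unfold[of \<phi> C I c \<sigma>]
    by (simp add: awp_char_apply variation_char_def add_right_mono)
qed

lemma subinvariant_plus_variation_le:
  assumes det: "deterministic C"
    and sub: "\<And>\<sigma>. I \<sigma> \<le> awp_char \<phi> C f I \<sigma>"
    and finite: "\<And>\<sigma>. I \<sigma> < \<infinity>"
    and le_variation: "\<And>c \<sigma>. c < \<infinity> \<Longrightarrow> c \<le> lfp (variation_char \<phi> C I) c \<sigma>"
    and "c < \<infinity>" and "I \<sigma> \<le> c"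
  shows "I \<sigma> + lfp (variation_char \<phi> C I) c \<sigma>
    \<le> lfp (awp_char \<phi> C f) \<sigma> + lfp (variation_char \<phi> C I) c \<sigma>"
proof -
  let ?L = "lfp (awp_char \<phi> C f)" and ?Z = "lfp (variation_char \<phi> C I)"
  let ?P = "\<lambda>Y. \<forall>c \<sigma>. c < \<infinity> \<longrightarrow> I \<sigma> \<le> c \<longrightarrow> I \<sigma> + Y c \<sigma> \<le> ?L \<sigma> + ?Z c \<sigma>"
  have "?P ?Z"
  proof (induction rule: lfp_ordinal_induct[where P = ?P, OF mono_variation_char])
    case (1 S)
    then show ?case
      using det sub finite by (blast intro: subinvariant_plus_variation_step)
  next
    case (2 M)
    have "I \<sigma> \<le> ?L \<sigma> + ?Z c \<sigma>" if "c < \<infinity>" and "I \<sigma> \<le> c" for c \<sigma>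
      using that le_variation by (meson add_increasing order_trans zero_le)
    with "2" show ?case
      by (auto intro!: ennreal_add_SUP_le)
  qed
  then show ?thesis
    using assms(5,6) by blast
qed

lemma subinvariant_le_lfp_awp_char_OST:
  assumes det: "deterministic C"
    and sub: "\<And>\<sigma>. I \<sigma> \<le> awp_char \<phi> C f I \<sigma>"
    and finite: "\<And>\<sigma>. I \<sigma> < \<infinity>"
    and variation_bounded: "\<And>\<sigma>. \<phi> \<sigma> \<Longrightarrow> awp C (\<lambda>\<tau>. absdiff (I \<tau>) (I \<sigma>)) \<sigma> \<le> ennreal b"
    and runtime: "\<And>\<sigma>. lfp (ert_char \<phi> C (\<lambda>_. 0)) \<sigma> < \<infinity>"
    and terminates: "\<And>\<sigma>. 1 \<le> lfp (awp_char \<phi> C (\<lambda>_. 1)) \<sigma>"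
  shows "I \<sigma> \<le> lfp (awp_char \<phi> C f) \<sigma>"
proof -
  let ?Z = "lfp (variation_char \<phi> C I)"
  have le_variation: "c \<le> ?Z c \<sigma>" if "c < \<infinity>" for c \<sigma>
  proof -
    have "c \<le> c * lfp (awp_char \<phi> C (\<lambda>_. 1)) \<sigma>"
      using terminates[of \<sigma>] mult_left_mono[of 1 _ c] by simp
    also have "\<dots> \<le> ?Z c \<sigma>"
      using finite that by (rule lfp_variation_char_ge)
    finally show ?thesis .
  qed
  have "?Z (I \<sigma>) \<sigma> \<le> I \<sigma> + ennreal b * lfp (ert_char \<phi> C (\<lambda>_. 0)) \<sigma>"
    using variation_bounded by (rule lfp_variation_char_le)
  also have "\<dots> < \<infinity>"
    using finite runtime by (simp add: ennreal_mult_eq_top_iff top.not_eq_extremum[symmetric])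
  finally have "?Z (I \<sigma>) \<sigma> \<noteq> \<infinity>"
    by simp
  moreover have "I \<sigma> + ?Z (I \<sigma>) \<sigma> \<le> lfp (awp_char \<phi> C f) \<sigma> + ?Z (I \<sigma>) \<sigma>"
    by (rule subinvariant_plus_variation_le[OF det sub finite le_variation finite order_refl])
  ultimately show ?thesis
    by (simp add: add.commute ennreal_add_left_cancel_le)
qed

locale stable_sound_provider =
  fixes P :: provider
  assumes stable_under_body_refinement: "\<And>\<phi> C C' I f. wf_prog C \<Longrightarrow> prog_refines C' C \<Longrightarrow>
      awp_star C' I = awp_star C I \<Longrightarrow> P (While \<phi> C I) f \<Longrightarrow> P (While \<phi> C' I) f"
    and sound_for_deterministic_loop: "\<And>\<phi> C I f \<sigma>. deterministic C \<Longrightarrow> wf_prog C \<Longrightarrow>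
      (\<And>\<sigma>. awp_star C I \<sigma> \<le> awp C I \<sigma>) \<Longrightarrow> P (While \<phi> C I) f \<Longrightarrow>
      I \<sigma> \<le> awp (While \<phi> C I) f \<sigma>"
begin

lemma vc_prog_refines_trans_awp:
  "wf_prog C \<Longrightarrow> vc P C f \<Longrightarrow> prog_refines C' (trans_awp C f) \<Longrightarrow> vc P C' f"
proof (induction C arbitrary: f C')
  case Skip
  then show ?case by (cases C') simp_all
next
  case (Assign x E)
  then show ?case by (cases C') simp_all
next
  case (Seq C1 C2)
  from Seq.prems(3) obtain D1 D2 where C': "C' = Seq D1 D2"
    and D1: "prog_refines D1 (trans_awp C1 (awp_star C2 f))"
    and D2: "prog_refines D2 (trans_awp C2 f)"
    by (cases C') simp_all
  have "vc P D1 (awp_star C2 f)"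
    using Seq.IH(1)[of "awp_star C2 f" D1] Seq.prems(1,2) D1 by simp
  moreover have "vc P D2 f"
    using Seq.IH(2)[of f D2] Seq.prems(1,2) D2 by simp
  moreover have "awp_star D2 f = awp_star C2 f"
    using D2 by (rule awp_star_prog_refines_trans_awp)
  ultimately show ?case
    by (simp add: C')
next
  case (GChoice \<phi>1 C1 \<phi>2 C2)
  from GChoice.prems(3) obtain \<psi>1 D1 \<psi>2 D2 where "C' = GChoice \<psi>1 D1 \<psi>2 D2"
    and "prog_refines D1 (trans_awp C1 f)" "prog_refines D2 (trans_awp C2 f)"
    by (cases C') simp_all
  with GChoice.prems(1,2) GChoice.IH(1)[of f D1] GChoice.IH(2)[of f D2] show ?case
    by simp
next
  case (PChoice C1 p C2)
  from PChoice.prems(3) obtain D1 D2 where "C' = PChoice D1 p D2"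
    and "prog_refines D1 (trans_awp C1 f)" "prog_refines D2 (trans_awp C2 f)"
    by (cases C') simp_all
  with PChoice.prems(1,2) PChoice.IH(1)[of f D1] PChoice.IH(2)[of f D2] show ?case
    by simp
next
  case (While \<phi> C I)
  from While.prems(3) obtain D where C': "C' = While \<phi> D I" and D: "prog_refines D (trans_awp C I)"
    by (cases C') simp_all
  have "wf_prog C"
    using While.prems(1) by simp
  have "prog_refines D C"
    using D trans_awp_prog_refines[OF \<open>wf_prog C\<close>] by (rule prog_refines_trans)
  moreover have "awp_star D I = awp_star C I"
    using D by (rule awp_star_prog_refines_trans_awp)
  moreover have "P (While \<phi> C I) f"
    using While.prems(2) by simp
  ultimately have "P (While \<phi> D I) f"
    by (rule stable_under_body_refinement[OF \<open>wf_prog C\<close>])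
  moreover have "vc P D I"
    using While.IH[of I D] \<open>wf_prog C\<close> While.prems(2) D by simp
  ultimately show ?case
    by (simp add: C')
qed

lemma awp_star_le_awp_if_deterministic:
  "deterministic C \<Longrightarrow> wf_prog C \<Longrightarrow> vc P C f \<Longrightarrow> awp_star C f \<sigma> \<le> awp C f \<sigma>"
proof (induction C arbitrary: f \<sigma>)
  case (Seq C1 C2)
  then have "awp_star C1 (awp_star C2 f) \<sigma> \<le> awp C1 (awp_star C2 f) \<sigma>"
    by simp
  also have "\<dots> \<le> awp C1 (awp C2 f) \<sigma>"
    using Seq by (intro awp_mono) simp
  finally show ?case by simp
next
  case (GChoice \<phi>1 C1 \<phi>2 C2)
  then show ?case
    unfolding awp_star.simps awp.simps by (intro max.mono mult_left_mono) simp_all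
next
  case (PChoice C1 p C2)
  then show ?case by (simp add: add_mono mult_left_mono)
next
  case (While \<phi> C I)
  then show ?case by (simp add: sound_for_deterministic_loop)
qed (simp_all add: subst_def)

theorem yields_lower_bounds: "yields_lower_bounds_awp P"
  unfolding yields_lower_bounds_awp_def
proof (intro allI impI le_funI)
  fix C f \<sigma>
  assume "wf_prog C" and "vc P C f"
  define D where "D = determinize (trans_awp C f)"
  have "prog_refines (trans_awp C f) C"
    using \<open>wf_prog C\<close> by (rule trans_awp_prog_refines)
  then have D_trans: "prog_refines D (trans_awp C f)"
    unfolding D_def by (intro determinize_prog_refines prog_refines_wf_prog)
  then have "prog_refines D C"
    using \<open>prog_refines (trans_awp C f) C\<close> by (rule prog_refines_trans)
  have "deterministic D"
    by (simp add: D_def deterministic_determinize)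
  have "wf_prog D"
    using D_trans by (rule prog_refines_wf_prog)
  have "vc P D f"
    using \<open>wf_prog C\<close> \<open>vc P C f\<close> D_trans by (rule vc_prog_refines_trans_awp)
  have "awp_star C f \<sigma> = awp_star D f \<sigma>"
    using D_trans by (simp add: awp_star_prog_refines_trans_awp)
  also have "\<dots> \<le> awp D f \<sigma>"
    using \<open>deterministic D\<close> \<open>wf_prog D\<close> \<open>vc P D f\<close> by (rule awp_star_le_awp_if_deterministic)
  also have "\<dots> \<le> awp C f \<sigma>"
    using \<open>prog_refines D C\<close> by (rule awp_prog_refines_le)
  finally show "awp_star C f \<sigma> \<le> awp C f \<sigma>" .
qed

theorem preserved_by_trans: "trans_preserves P"
  unfolding trans_preserves_def by (meson vc_prog_refines_trans_awp impl_prog_refines)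

end

interpretation dAST_provider: stable_sound_provider dASTSUBINV
proof
  fix \<phi> C C' I f
  assume "wf_prog C" "prog_refines C' C" "awp_star C' I = awp_star C I" "dASTSUBINV (While \<phi> C I) f"
  then show "dASTSUBINV (While \<phi> C' I) f"
    using dAST_prog_refines[of "While \<phi> C' I" "While \<phi> C I"] by auto
next
  fix \<phi> C I f \<sigma>
  assume det: "deterministic C" and "wf_prog C"
    and ih: "\<And>\<sigma>. awp_star C I \<sigma> \<le> awp C I \<sigma>" and P: "dASTSUBINV (While \<phi> C I) f"
  from P obtain b where bounded: "\<And>\<sigma>. I \<sigma> \<le> ennreal b"
    by auto
  have sub: "I \<sigma> \<le> awp_char \<phi> C f I \<sigma>" for \<sigma>
    using P ih by (intro subinvariant_awp_char) auto
  have terminates: "1 \<le> lfp (awp_char \<phi> C (\<lambda>_. 1)) \<sigma>" for \<sigma>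
    using P \<open>wf_prog C\<close> one_le_awp_one_if_dAST[of "While \<phi> C I"] by (simp add: awp_While)
  show "I \<sigma> \<le> awp (While \<phi> C I) f \<sigma>"
    unfolding awp_While using det sub bounded terminates
    by (rule bounded_subinvariant_le_lfp_awp_char)
qed

interpretation dPAST_provider: stable_sound_provider dPASTSUBINV
proof
  fix \<phi> C C' I f
  assume "wf_prog C" and refines: "prog_refines C' C" and "awp_star C' I = awp_star C I"
    and "dPASTSUBINV (While \<phi> C I) f"
  then have "\<forall>\<sigma>. iver \<phi> \<sigma> * awp_star C' I \<sigma> + iver (\<lambda>\<tau>. \<not> \<phi> \<tau>) \<sigma> * f \<sigma> \<ge> I \<sigma>"
    and "dPAST (While \<phi> C I)" and "suitable_OST (While \<phi> C I) f"
    unfolding dPASTSUBINV.simps by simp_all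
  moreover have "prog_refines (While \<phi> C' I) (While \<phi> C I)"
    using refines by simp
  ultimately show "dPASTSUBINV (While \<phi> C' I) f"
    unfolding dPASTSUBINV.simps using refines
    by (blast intro: dPAST_prog_refines suitable_OST_prog_refines)
next
  fix \<phi> C I f \<sigma>
  assume det: "deterministic C" and "wf_prog C"
    and ih: "\<And>\<sigma>. awp_star C I \<sigma> \<le> awp C I \<sigma>" and P: "dPASTSUBINV (While \<phi> C I) f"
  have OST: "suitable_OST (While \<phi> C I) f"
    using P by simp
  then obtain b where b: "\<forall>\<sigma>. iver \<phi> \<sigma> * awp C (\<lambda>\<tau>. absdiff (I \<tau>) (I \<sigma>)) \<sigma> \<le> ennreal b"
    unfolding suitable_OST.simps by blast
  have variation_bounded: "awp C (\<lambda>\<tau>. absdiff (I \<tau>) (I \<sigma>)) \<sigma> \<le> ennreal b" if "\<phi> \<sigma>" for \<sigma>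
    using that b[rule_format, of \<sigma>] by simp
  have finite: "I \<sigma> < \<infinity>" for \<sigma>
    using OST unfolding suitable_OST.simps by blast
  have sub: "I \<sigma> \<le> awp_char \<phi> C f I \<sigma>" for \<sigma>
    using P ih by (intro subinvariant_awp_char) auto
  have runtime: "lfp (ert_char \<phi> C (\<lambda>_. 0)) \<sigma> < \<infinity>" for \<sigma>
    using P by (simp add: dPAST_def ert_While)
  have terminates: "1 \<le> lfp (awp_char \<phi> C (\<lambda>_. 1)) \<sigma>" for \<sigma>
    using \<open>wf_prog C\<close> one_le_awp_one_if_ert_finite[of "While \<phi> C I"] runtime
    by (simp add: awp_While ert_While)
  show "I \<sigma> \<le> awp (While \<phi> C I) f \<sigma>"
    unfolding awp_While using det sub finite variation_bounded runtime terminates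
    by (rule subinvariant_le_lfp_awp_char_OST)
qed

theorem theorem6p9:
  shows "yields_lower_bounds_awp dASTSUBINV \<and> trans_preserves dASTSUBINV \<and>
         yields_lower_bounds_awp dPASTSUBINV \<and> trans_preserves dPASTSUBINV"
  using dAST_provider.yields_lower_bounds dAST_provider.preserved_by_trans
    dPAST_provider.yields_lower_bounds dPAST_provider.preserved_by_trans
  by blast

end
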